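(* Let $P$ be a weak plane poset with underlying set $[n]$ such that the total order $\ll$ is the natural order of $[n]$. Then $$WLin(P)=\bigsqcup_{f\in Lin(P)}\{g\in PW(n)\mid g\prec f\},$$ and the union on the right-hand side is disjoint.
   Context: A packed word of length $n$ is a surjection $f:[n]\to[k]$ for some $k$, written $f(1)\cdots f(n)$; $PW(n)$ is the set of these. A weak plane poset is a finite set with two partial orders $\leq_1,\leq_2$ such that $x\leq_1 y$ and $x\leq_2 y$ imply $x=y$, and such that $x\preceq y\iff(x\leq_1 y$ or $x\leq_2 y)$ is a total quasi-order; $x\equiv y$ means $x\preceq y$ and $y\preceq x$; $x\ll y\iff(y\leq_1 x$ or $x\leq_2 y)$ is a total order. $Lin(P)$ is the set of surjections $f:[n]\to[k]$ such that $i\leq_1 j\Rightarrow f(i)\leq f(j)$ and $f(i)=f(j)\Rightarrow i\equiv j$ (linear extensions). $WLin(P)$ is the set of surjections $f:[n]\to[k]$ such that $i\leq_1 j\Rightarrow f(i)\leq f(j)$ and ($i\leq_1 j$ and $f(i)=f(j)$) $\Rightarrow i\equiv j$ (weak linear extensions). For $f,g\in PW(n)$, $g\prec f$ means: (1) for all $i,j$, $f(i)\leq f(j)\Rightarrow g(i)\leq g(j)$; (2) for all $i,j$, ($i<j$ and $f(i)>f(j)$) $\Rightarrow g(i)>g(j)$. (In particular $f\prec f$.) *)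

theory Defs
  imports Main "HOL-Library.Disjoint_Sets"
begin

definition PW :: "nat \<Rightarrow> (nat \<Rightarrow> nat) set" where
  "PW n = {f. (\<forall>i. i \<notin> {1..n} \<longrightarrow> f i = 0) \<and> (\<exists>k. f ` {1..n} = {1..k})}"

definition partial_order_on' :: "'a set \<Rightarrow> ('a \<Rightarrow> 'a \<Rightarrow> bool) \<Rightarrow> bool" where
  "partial_order_on' A r \<longleftrightarrow>
     (\<forall>x y. r x y \<longrightarrow> x \<in> A \<and> y \<in> A) \<and>
     (\<forall>x\<in>A. r x x) \<and>
     (\<forall>x\<in>A. \<forall>y\<in>A. r x y \<and> r y x \<longrightarrow> x = y) \<and>
     (\<forall>x\<in>A. \<forall>y\<in>A. \<forall>z\<in>A. r x y \<and> r y z \<longrightarrow> r x z)"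

definition total_quasi_order_on :: "'a set \<Rightarrow> ('a \<Rightarrow> 'a \<Rightarrow> bool) \<Rightarrow> bool" where
  "total_quasi_order_on A r \<longleftrightarrow>
     (\<forall>x\<in>A. r x x) \<and>
     (\<forall>x\<in>A. \<forall>y\<in>A. \<forall>z\<in>A. r x y \<and> r y z \<longrightarrow> r x z) \<and>
     (\<forall>x\<in>A. \<forall>y\<in>A. r x y \<or> r y x)"

definition total_order_on' :: "'a set \<Rightarrow> ('a \<Rightarrow> 'a \<Rightarrow> bool) \<Rightarrow> bool" where
  "total_order_on' A r \<longleftrightarrow> total_quasi_order_on A r \<and>
     (\<forall>x\<in>A. \<forall>y\<in>A. r x y \<and> r y x \<longrightarrow> x = y)"

definition qle :: "(nat \<Rightarrow> nat \<Rightarrow> bool) \<Rightarrow> (nat \<Rightarrow> nat \<Rightarrow> bool) \<Rightarrow> nat \<Rightarrow> nat \<Rightarrow> bool" where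
  "qle le1 le2 x y \<longleftrightarrow> le1 x y \<or> le2 x y"

definition qeq :: "(nat \<Rightarrow> nat \<Rightarrow> bool) \<Rightarrow> (nat \<Rightarrow> nat \<Rightarrow> bool) \<Rightarrow> nat \<Rightarrow> nat \<Rightarrow> bool" where
  "qeq le1 le2 x y \<longleftrightarrow> qle le1 le2 x y \<and> qle le1 le2 y x"

definition tll :: "(nat \<Rightarrow> nat \<Rightarrow> bool) \<Rightarrow> (nat \<Rightarrow> nat \<Rightarrow> bool) \<Rightarrow> nat \<Rightarrow> nat \<Rightarrow> bool" where
  "tll le1 le2 x y \<longleftrightarrow> le1 y x \<or> le2 x y"

definition weak_plane_poset :: "nat \<Rightarrow> (nat \<Rightarrow> nat \<Rightarrow> bool) \<Rightarrow> (nat \<Rightarrow> nat \<Rightarrow> bool) \<Rightarrow> bool" where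
  "weak_plane_poset n le1 le2 \<longleftrightarrow>
     partial_order_on' {1..n} le1 \<and> partial_order_on' {1..n} le2 \<and>
     (\<forall>x y. le1 x y \<and> le2 x y \<longrightarrow> x = y) \<and>
     total_quasi_order_on {1..n} (qle le1 le2) \<and>
     total_order_on' {1..n} (tll le1 le2)"

definition Lin :: "nat \<Rightarrow> (nat \<Rightarrow> nat \<Rightarrow> bool) \<Rightarrow> (nat \<Rightarrow> nat \<Rightarrow> bool) \<Rightarrow> (nat \<Rightarrow> nat) set" where
  "Lin n le1 le2 = {f \<in> PW n.
     (\<forall>i\<in>{1..n}. \<forall>j\<in>{1..n}. le1 i j \<longrightarrow> f i \<le> f j) \<and>
     (\<forall>i\<in>{1..n}. \<forall>j\<in>{1..n}. f i = f j \<longrightarrow> qeq le1 le2 i j)}"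

definition WLin :: "nat \<Rightarrow> (nat \<Rightarrow> nat \<Rightarrow> bool) \<Rightarrow> (nat \<Rightarrow> nat \<Rightarrow> bool) \<Rightarrow> (nat \<Rightarrow> nat) set" where
  "WLin n le1 le2 = {f \<in> PW n.
     (\<forall>i\<in>{1..n}. \<forall>j\<in>{1..n}. le1 i j \<longrightarrow> f i \<le> f j) \<and>
     (\<forall>i\<in>{1..n}. \<forall>j\<in>{1..n}. le1 i j \<and> f i = f j \<longrightarrow> qeq le1 le2 i j)}"

definition pw_prec :: "nat \<Rightarrow> (nat \<Rightarrow> nat) \<Rightarrow> (nat \<Rightarrow> nat) \<Rightarrow> bool" where
  "pw_prec n g f \<longleftrightarrow>
     (\<forall>i\<in>{1..n}. \<forall>j\<in>{1..n}. f i \<le> f j \<longrightarrow> g i \<le> g j) \<and>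
     (\<forall>i\<in>{1..n}. \<forall>j\<in>{1..n}. i < j \<and> f i > f j \<longrightarrow> g i > g j)"

end

theory Submission
  imports Defs "HOL-Library.Product_Lexorder"
begin

text \<open>
  Fix a weak linear extension g. Call i and j tied if g i = g j and i \<equiv> j; within a level
  set of g the tie classes are intervals of the natural order. If f \<in> Lin(P) and g \<prec> f,
  then f(i) = f(j) exactly when i and j are tied, and distinct tie classes of the same level
  are ordered by f as they are ordered naturally. So f orders [n] lexicographically by
  (g i, least element tied to i); being packed, f must be the packing of this key, and that
  packing does lie in Lin(P) above g. Conversely g \<prec> f with f \<in> Lin(P) forces g \<in> WLin(P).
\<close>

lemma card_image_le_if_fibres_refine:
  assumes "finite B" and "\<And>x y. x \<in> B \<Longrightarrow> y \<in> B \<Longrightarrow> h x = h y \<Longrightarrow> f x = f y"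
  shows "card (f ` B) \<le> card (h ` B)"
proof -
  have "f ` B \<subseteq> (\<lambda>t. f (inv_into B h t)) ` (h ` B)"
  proof
    fix v assume "v \<in> f ` B"
    then obtain x where x: "x \<in> B" "v = f x" by blast
    have "h (inv_into B h (h x)) = h x" "inv_into B h (h x) \<in> B"
      using x(1) by (auto intro: f_inv_into_f inv_into_into)
    then show "v \<in> (\<lambda>t. f (inv_into B h t)) ` (h ` B)"
      using assms(2) x by (metis image_eqI imageI)
  qed
  then have "card (f ` B) \<le> card ((\<lambda>t. f (inv_into B h t)) ` (h ` B))"
    using assms(1) by (intro card_mono) auto
  also have "\<dots> \<le> card (h ` B)"
    by (rule card_image_le) (use assms(1) in simp)
  finally show ?thesis .
qed

lemma card_image_eq_if_same_fibres:
  assumes "finite B" and "\<And>x y. x \<in> B \<Longrightarrow> y \<in> B \<Longrightarrow> f x = f y \<longleftrightarrow> h x = h y"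
  shows "card (f ` B) = card (h ` B)"
proof (rule order.antisym)
  show "card (f ` B) \<le> card (h ` B)"
    by (rule card_image_le_if_fibres_refine) (use assms in blast)+
  show "card (h ` B) \<le> card (f ` B)"
    by (rule card_image_le_if_fibres_refine) (use assms in blast)+
qed

lemma card_less_strict_mono:
  fixes S :: "'a::linorder set"
  assumes "finite S" "s \<in> S" "s < s'"
  shows "card {t\<in>S. t < s} < card {t\<in>S. t < s'}"
  by (rule psubset_card_mono) (use assms in auto)

lemma card_less_le_iff:
  fixes S :: "'a::linorder set"
  assumes "finite S" "s \<in> S" "s' \<in> S"
  shows "card {t\<in>S. t < s} \<le> card {t\<in>S. t < s'} \<longleftrightarrow> s \<le> s'"
  using card_less_strict_mono[OF assms(1,2), of s'] card_less_strict_mono[OF assms(1,3), of s]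
  by (cases s s' rule: linorder_cases) auto

lemma card_less_image:
  fixes S :: "'a::linorder set"
  assumes "finite S"
  shows "(\<lambda>s. card {t\<in>S. t < s} + 1) ` S = {1..card S}"
proof -
  have "card {t\<in>S. t < s} < card S" if "s \<in> S" for s
    by (rule psubset_card_mono) (use assms that in auto)
  then have sub: "(\<lambda>s. card {t\<in>S. t < s} + 1) ` S \<subseteq> {1..card S}"
    by force
  have "inj_on (\<lambda>s. card {t\<in>S. t < s} + 1) S"
  proof (rule inj_onI)
    fix x y assume "x \<in> S" "y \<in> S" "card {t\<in>S. t < x} + 1 = card {t\<in>S. t < y} + 1"
    then show "x = y"
      using card_less_le_iff[OF assms, of x y] card_less_le_iff[OF assms, of y x] by simp
  qed
  then have "card ((\<lambda>s. card {t\<in>S. t < s} + 1) ` S) = card {1..card S}"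
    by (simp add: card_image)
  then show ?thesis
    using card_subset_eq[OF _ sub] by simp
qed

definition pack :: "'a set \<Rightarrow> ('a \<Rightarrow> 'b::linorder) \<Rightarrow> 'a \<Rightarrow> nat" where
  "pack A key i = (if i \<in> A then card {t \<in> key ` A. t < key i} + 1 else 0)"

lemma pack_le_iff:
  assumes "finite A" "i \<in> A" "j \<in> A"
  shows "pack A key i \<le> pack A key j \<longleftrightarrow> key i \<le> key j"
  using card_less_le_iff[of "key ` A"] assms by (simp add: pack_def)

lemma pack_in_PW: "pack {1..n} key \<in> PW n"
proof -
  have "pack {1..n} key ` {1..n} = (\<lambda>s. card {t\<in>key ` {1..n}. t < s} + 1) ` key ` {1..n}"
    unfolding image_image by (rule image_cong) (auto simp: pack_def)
  also have "\<dots> = {1..card (key ` {1..n})}"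
    by (rule card_less_image) simp
  finally show ?thesis
    unfolding PW_def by (auto simp: pack_def)
qed

lemma eq_pack_if_same_order:
  assumes "finite A" and outside: "\<forall>i. i \<notin> A \<longrightarrow> f i = 0" and packed: "f ` A = {1..k}"
    and order: "\<forall>i\<in>A. \<forall>j\<in>A. f i \<le> f j \<longleftrightarrow> key i \<le> key j"
  shows "f = pack A key"
proof
  fix i
  show "f i = pack A key i"
  proof (cases "i \<in> A")
    case True
    define B where "B = {j\<in>A. f j < f i}"
    have "f i \<in> {1..k}" using packed True by blast
    then have "f ` B = {1..<f i}"
      using packed unfolding B_def by fastforce
    then have "f i - 1 = card (f ` B)" by simp
    also have "\<dots> = card (key ` B)"
      using order \<open>finite A\<close> by (intro card_image_eq_if_same_fibres) (auto simp: B_def order.eq_iff)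
    also have "key ` B = {t \<in> key ` A. t < key i}"
      using order True unfolding B_def by (auto simp: less_le_not_le)
    finally show ?thesis
      using True \<open>f i \<in> {1..k}\<close> by (simp add: pack_def) arith
  qed (simp add: outside pack_def)
qed

lemma PW_eq_pack_if_same_order:
  assumes "f \<in> PW n" "\<forall>i\<in>{1..n}. \<forall>j\<in>{1..n}. f i \<le> f j \<longleftrightarrow> key i \<le> key j"
  shows "f = pack {1..n} key"
  using assms eq_pack_if_same_order[of "{1..n}" f] unfolding PW_def by blast

locale natural_wpp =
  fixes n :: nat and le1 le2 :: "nat \<Rightarrow> nat \<Rightarrow> bool"
  assumes weak_plane: "weak_plane_poset n le1 le2"
    and tll_natural: "\<forall>x\<in>{1..n}. \<forall>y\<in>{1..n}. tll le1 le2 x y \<longleftrightarrow> x \<le> y"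
begin

lemma le1_dom: "le1 x y \<Longrightarrow> x \<in> {1..n} \<and> y \<in> {1..n}"
  and le2_dom: "le2 x y \<Longrightarrow> x \<in> {1..n} \<and> y \<in> {1..n}"
  and le1_refl: "x \<in> {1..n} \<Longrightarrow> le1 x x"
  using weak_plane unfolding weak_plane_poset_def partial_order_on'_def by blast+

lemma le1_descending: "le1 x y \<Longrightarrow> y \<le> x"
  using tll_natural le1_dom[of x y] unfolding tll_def by blast

lemma le2_ascending: "le2 x y \<Longrightarrow> x \<le> y"
  using tll_natural le2_dom[of x y] unfolding tll_def by blast

lemma qle_trans: "x \<in> {1..n} \<Longrightarrow> y \<in> {1..n} \<Longrightarrow> z \<in> {1..n} \<Longrightarrow>
    qle le1 le2 x y \<Longrightarrow> qle le1 le2 y z \<Longrightarrow> qle le1 le2 x z"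
  and qle_total: "x \<in> {1..n} \<Longrightarrow> y \<in> {1..n} \<Longrightarrow> qle le1 le2 x y \<or> qle le1 le2 y x"
  using weak_plane unfolding weak_plane_poset_def total_quasi_order_on_def by blast+

lemma qeq_refl: "x \<in> {1..n} \<Longrightarrow> qeq le1 le2 x x"
  using le1_refl unfolding qeq_def qle_def by blast

lemma qeq_sym: "qeq le1 le2 x y \<Longrightarrow> qeq le1 le2 y x"
  unfolding qeq_def by blast

lemma qeq_trans: "x \<in> {1..n} \<Longrightarrow> y \<in> {1..n} \<Longrightarrow> z \<in> {1..n} \<Longrightarrow>
    qeq le1 le2 x y \<Longrightarrow> qeq le1 le2 y z \<Longrightarrow> qeq le1 le2 x z"
  unfolding qeq_def using qle_trans by blast

lemma le1_if_qle_descending: "y < x \<Longrightarrow> qle le1 le2 x y \<Longrightarrow> le1 x y"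
  unfolding qle_def using le2_ascending by force

lemma WLin_if_prec_Lin:
  assumes g: "g \<in> PW n" and f: "f \<in> Lin n le1 le2" and prec: "pw_prec n g f"
  shows "g \<in> WLin n le1 le2"
proof -
  have "qeq le1 le2 i j" if ij: "i \<in> {1..n}" "j \<in> {1..n}" "le1 i j" "g i = g j" for i j
  proof (cases "i = j")
    case True
    then show ?thesis using qeq_refl ij by simp
  next
    case False
    then have "j < i" using le1_descending ij by force
    have "f i \<le> f j" using f ij unfolding Lin_def by blast
    moreover have "\<not> f i < f j"
      using prec ij \<open>j < i\<close> unfolding pw_prec_def by force
    ultimately have "f i = f j" by simp
    then show ?thesis using f ij unfolding Lin_def by blast
  qed
  moreover have "\<forall>i\<in>{1..n}. \<forall>j\<in>{1..n}. le1 i j \<longrightarrow> g i \<le> g j"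
    using f prec unfolding Lin_def pw_prec_def by blast
  ultimately show ?thesis using g unfolding WLin_def by blast
qed

end

locale natural_wpp_WLin = natural_wpp +
  fixes g :: "nat \<Rightarrow> nat"
  assumes g_WLin: "g \<in> WLin n le1 le2"
begin

definition tied :: "nat \<Rightarrow> nat \<Rightarrow> bool" where
  "tied i j \<longleftrightarrow> i \<in> {1..n} \<and> j \<in> {1..n} \<and> g i = g j \<and> qeq le1 le2 i j"

lemma g_mono_le1: "le1 i j \<Longrightarrow> g i \<le> g j"
  using g_WLin le1_dom[of i j] unfolding WLin_def by blast

lemma tied_if_le1: "le1 i j \<Longrightarrow> g i = g j \<Longrightarrow> tied i j"
  using g_WLin le1_dom[of i j] unfolding WLin_def tied_def by blast

lemma tied_refl: "i \<in> {1..n} \<Longrightarrow> tied i i"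
  unfolding tied_def using qeq_refl by auto

lemma tied_sym: "tied i j \<Longrightarrow> tied j i"
  unfolding tied_def using qeq_sym by auto

lemma tied_trans: "tied i j \<Longrightarrow> tied j k \<Longrightarrow> tied i k"
  unfolding tied_def using qeq_trans by metis

text \<open>
  If k lies naturally between i \<equiv> j, totality of \<preceq> gives k \<preceq> i or j \<preceq> k; either relation
  runs against the natural order, so it is an instance of le1, and as the g-values agree,
  the weak linear extension g makes it a tie.
\<close>

lemma tied_between:
  assumes "i < k" "k < j" "tied i j" "g k = g i" "k \<in> {1..n}"
  shows "tied i k"
proof -
  have i: "i \<in> {1..n}" and j: "j \<in> {1..n}" using assms(3) tied_def by auto
  show ?thesis
  proof (cases "qle le1 le2 k i")
    case True
    then show ?thesis
      using le1_if_qle_descending tied_if_le1 tied_sym assms by metis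
  next
    case False
    then have "qle le1 le2 i k" using qle_total i assms(5) by blast
    moreover have "qle le1 le2 j i" using assms(3) unfolding tied_def qeq_def by blast
    ultimately have "qle le1 le2 j k" using qle_trans i j assms(5) by blast
    then have "tied j k"
      using le1_if_qle_descending tied_if_le1 assms tied_def by metis
    then show ?thesis using tied_trans assms(3) by blast
  qed
qed

definition tie_min :: "nat \<Rightarrow> nat" where
  "tie_min i = Min {j. tied i j}"

lemma finite_tied: "finite {j. tied i j}"
  by (rule finite_subset[of _ "{1..n}"]) (auto simp: tied_def)

lemma tied_tie_min: "i \<in> {1..n} \<Longrightarrow> tied i (tie_min i)"
  unfolding tie_min_def using Min_in[OF finite_tied] tied_refl by auto

lemma tie_min_le: "i \<in> {1..n} \<Longrightarrow> tie_min i \<le> i"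
  unfolding tie_min_def using Min_le[OF finite_tied] tied_refl by auto

lemma tie_min_eq_if_tied: "tied i j \<Longrightarrow> tie_min i = tie_min j"
proof -
  assume "tied i j"
  then have "{k. tied i k} = {k. tied j k}" using tied_trans tied_sym by blast
  then show ?thesis unfolding tie_min_def by simp
qed

lemma tie_min_mono:
  assumes "i < j" "g i = g j" "i \<in> {1..n}" "j \<in> {1..n}"
  shows "tie_min i \<le> tie_min j"
proof (cases "tie_min j < i")
  case True
  have "tied (tie_min j) j" "g (tie_min j) = g j"
    using tied_tie_min[OF assms(4)] tied_sym tied_def by auto
  then have "tied (tie_min j) i"
    using tied_between[of "tie_min j" i j] True assms by auto
  then have "tied j i" using tied_tie_min[OF assms(4)] tied_trans by blast
  then show ?thesis using tie_min_eq_if_tied by simp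
next
  case False
  then show ?thesis using tie_min_le[OF assms(3)] by simp
qed

definition key :: "nat \<Rightarrow> nat \<times> nat" where
  "key i = (g i, tie_min i)"

lemma key_eq_iff_tied: "i \<in> {1..n} \<Longrightarrow> j \<in> {1..n} \<Longrightarrow> key i = key j \<longleftrightarrow> tied i j"
  unfolding key_def
  by (metis prod.inject tie_min_eq_if_tied tied_def tied_sym tied_tie_min tied_trans)

lemma key_le_if_le1:
  assumes "le1 i j"
  shows "key i \<le> key j"
proof (cases "g i = g j")
  case True
  then have "key i = key j"
    using tied_if_le1[OF assms] key_eq_iff_tied le1_dom[OF assms] by blast
  then show ?thesis by simp
next
  case False
  then show ?thesis using g_mono_le1[OF assms] by (simp add: key_def)
qed

lemma key_descent_imp_g_descent:
  assumes "i < j" "key j < key i" "i \<in> {1..n}" "j \<in> {1..n}"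
  shows "g j < g i"
proof (rule ccontr)
  assume "\<not> g j < g i"
  with assms(2) have "g j = g i" "tie_min j < tie_min i" by (auto simp: key_def)
  then show False using tie_min_mono[OF assms(1) _ assms(3,4)] by simp
qed

context
  fixes f :: "nat \<Rightarrow> nat"
  assumes f_Lin: "f \<in> Lin n le1 le2" and prec: "pw_prec n g f"
begin

lemma Lin_prec_eq_iff_tied:
  assumes ij: "i \<in> {1..n}" "j \<in> {1..n}"
  shows "f i = f j \<longleftrightarrow> tied i j"
proof
  assume eq: "f i = f j"
  then have "g i \<le> g j" "g j \<le> g i"
    using prec ij unfolding pw_prec_def by auto
  then have "g i = g j" by simp
  moreover have "qeq le1 le2 i j" using f_Lin ij eq unfolding Lin_def by blast
  ultimately show "tied i j" using ij unfolding tied_def by blast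
next
  have ordered: "f i = f j" if "tied i j" "i < j" for i j
  proof -
    have "le1 j i"
      using le1_if_qle_descending that unfolding tied_def qeq_def by blast
    then have "f j \<le> f i" using f_Lin le1_dom unfolding Lin_def by blast
    moreover have "\<not> f j < f i"
      using prec that unfolding pw_prec_def tied_def by force
    ultimately show ?thesis by simp
  qed
  assume t: "tied i j"
  show "f i = f j"
  proof (cases i j rule: linorder_cases)
    case less
    then show ?thesis using ordered[OF t] by simp
  next
    case equal
    then show ?thesis by simp
  next
    case greater
    then show ?thesis using ordered[OF tied_sym[OF t]] by simp
  qed
qed

lemma Lin_prec_less_imp_key_less:
  assumes ij: "i \<in> {1..n}" "j \<in> {1..n}" and less: "f i < f j"
  shows "key i < key j"
proof -
  have "g i \<le> g j" using prec ij less unfolding pw_prec_def by simp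
  moreover have "tie_min i < tie_min j" if "g i = g j"
  proof (rule ccontr)
    txt \<open>Otherwise the least elements of the two tie classes form an inversion of f
      that g \<prec> f would transfer to g.\<close>
    assume "\<not> tie_min i < tie_min j"
    moreover have "key i \<noteq> key j"
      using less Lin_prec_eq_iff_tied[OF ij] key_eq_iff_tied[OF ij] by simp
    then have "tie_min i \<noteq> tie_min j" using that by (auto simp: key_def)
    ultimately have lt: "tie_min j < tie_min i" by simp
    have tied: "tied (tie_min i) i" "tied (tie_min j) j"
      using tied_tie_min ij tied_sym by blast+
    then have mem: "tie_min i \<in> {1..n}" "tie_min j \<in> {1..n}"
      unfolding tied_def by blast+
    have "f (tie_min i) = f i" "f (tie_min j) = f j"
      using Lin_prec_eq_iff_tied mem ij tied by simp_all
    then have "f (tie_min i) < f (tie_min j)" using less by simp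
    then have "g (tie_min i) < g (tie_min j)"
      using prec lt mem unfolding pw_prec_def by blast
    then show False using tied that unfolding tied_def by simp
  qed
  ultimately show ?thesis
    unfolding key_def by (cases "g i = g j") auto
qed

lemma Lin_prec_same_order_as_key:
  "\<forall>i\<in>{1..n}. \<forall>j\<in>{1..n}. f i \<le> f j \<longleftrightarrow> key i \<le> key j"
proof (intro ballI iffI)
  fix i j assume ij: "i \<in> {1..n}" "j \<in> {1..n}"
  {
    assume "f i \<le> f j"
    then show "key i \<le> key j"
      using Lin_prec_less_imp_key_less[OF ij] Lin_prec_eq_iff_tied[OF ij] key_eq_iff_tied[OF ij]
      by (auto simp: le_less)
  next
    assume "key i \<le> key j"
    then show "f i \<le> f j"
      using Lin_prec_less_imp_key_less[OF ij(2,1)] by (metis leD not_le_imp_less)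
  }
qed

end

lemma Lin_prec_if_same_order_as_key:
  assumes f: "f \<in> PW n" and order: "\<forall>i\<in>{1..n}. \<forall>j\<in>{1..n}. f i \<le> f j \<longleftrightarrow> key i \<le> key j"
  shows "f \<in> Lin n le1 le2 \<and> pw_prec n g f"
proof -
  have "f i = f j \<longleftrightarrow> key i = key j" if ij: "i \<in> {1..n}" "j \<in> {1..n}" for i j
  proof -
    have "f i \<le> f j \<longleftrightarrow> key i \<le> key j" "f j \<le> f i \<longleftrightarrow> key j \<le> key i"
      using order ij by blast+
    then show ?thesis by (simp add: order.eq_iff)
  qed
  then have "\<forall>i\<in>{1..n}. \<forall>j\<in>{1..n}. f i = f j \<longrightarrow> qeq le1 le2 i j"
    using key_eq_iff_tied tied_def by blast
  moreover have "\<forall>i\<in>{1..n}. \<forall>j\<in>{1..n}. le1 i j \<longrightarrow> f i \<le> f j"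
    using order key_le_if_le1 by blast
  moreover have "\<forall>i\<in>{1..n}. \<forall>j\<in>{1..n}. f i \<le> f j \<longrightarrow> g i \<le> g j"
    using order by (auto simp: key_def)
  moreover have "\<forall>i\<in>{1..n}. \<forall>j\<in>{1..n}. i < j \<and> f j < f i \<longrightarrow> g j < g i"
  proof (intro ballI impI)
    fix i j assume ij: "i \<in> {1..n}" "j \<in> {1..n}" and "i < j \<and> f j < f i"
    moreover have "\<not> f i \<le> f j \<longleftrightarrow> \<not> key i \<le> key j" using order ij by blast
    ultimately have "i < j" "key j < key i" by auto
    then show "g j < g i" using key_descent_imp_g_descent ij by blast
  qed
  ultimately show ?thesis
    using f unfolding Lin_def pw_prec_def by blast
qed

lemma Lin_prec_iff_eq_pack: "f \<in> Lin n le1 le2 \<and> pw_prec n g f \<longleftrightarrow> f = pack {1..n} key"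
proof
  assume f: "f \<in> Lin n le1 le2 \<and> pw_prec n g f"
  then have "f \<in> PW n" unfolding Lin_def by blast
  moreover have "\<forall>i\<in>{1..n}. \<forall>j\<in>{1..n}. f i \<le> f j \<longleftrightarrow> key i \<le> key j"
    using Lin_prec_same_order_as_key[of f] f by blast
  ultimately show "f = pack {1..n} key" by (rule PW_eq_pack_if_same_order)
next
  assume f: "f = pack {1..n} key"
  have "\<forall>i\<in>{1..n}. \<forall>j\<in>{1..n}. pack {1..n} key i \<le> pack {1..n} key j \<longleftrightarrow> key i \<le> key j"
    by (simp add: pack_le_iff)
  then show "f \<in> Lin n le1 le2 \<and> pw_prec n g f"
    unfolding f by (rule Lin_prec_if_same_order_as_key[OF pack_in_PW])
qed

end

lemma (in natural_wpp) ex1_Lin_prec_if_WLin: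
  assumes "g \<in> WLin n le1 le2"
  shows "\<exists>!f. f \<in> Lin n le1 le2 \<and> pw_prec n g f"
proof -
  interpret natural_wpp_WLin n le1 le2 g
    by (rule natural_wpp_WLin.intro[OF natural_wpp_axioms]) (unfold_locales, fact)
  show ?thesis
    by (rule ex1I[where a = "pack {1..n} key"]) (simp_all add: Lin_prec_iff_eq_pack)
qed

theorem mainTheorem6:
  fixes n :: nat and le1 le2 :: "nat \<Rightarrow> nat \<Rightarrow> bool"
  assumes "weak_plane_poset n le1 le2"
    and "\<forall>x\<in>{1..n}. \<forall>y\<in>{1..n}. tll le1 le2 x y \<longleftrightarrow> x \<le> y"
  shows "WLin n le1 le2 = (\<Union>f\<in>Lin n le1 le2. {g \<in> PW n. pw_prec n g f})
    \<and> disjoint_family_on (\<lambda>f. {g \<in> PW n. pw_prec n g f}) (Lin n le1 le2)"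
proof -
  interpret natural_wpp n le1 le2 using assms by unfold_locales
  have "g \<in> (\<Union>f\<in>Lin n le1 le2. {g \<in> PW n. pw_prec n g f})" if "g \<in> WLin n le1 le2" for g
    using ex1_Lin_prec_if_WLin[OF that] that unfolding WLin_def by blast
  moreover have "(\<Union>f\<in>Lin n le1 le2. {g \<in> PW n. pw_prec n g f}) \<subseteq> WLin n le1 le2"
    using WLin_if_prec_Lin by blast
  moreover have "f1 = f2"
    if "f1 \<in> Lin n le1 le2" "f2 \<in> Lin n le1 le2" "g \<in> PW n" "pw_prec n g f1" "pw_prec n g f2"
    for f1 f2 g
    using ex1_Lin_prec_if_WLin[OF WLin_if_prec_Lin] that by blast
  then have "disjoint_family_on (\<lambda>f. {g \<in> PW n. pw_prec n g f}) (Lin n le1 le2)"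
    unfolding disjoint_family_on_def by blast
  ultimately show ?thesis by blast
qed

end
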